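(* In a network satisfying (H1) and (H2), let $X$ be a species, $\ell\ge1$, and let $\prod_{i=1}^m z_i$, with $m\ge2$ and each $Z_i$ a non-intermediate species (not necessarily distinct), be a monomial appearing in $x^{(\ell)}$. Then there exist $1\le i_1<i_2\le m$ such that $Z_{i_1}$ reacts with $Z_{i_2}$.
   Context: Species are capital letters, concentrations lower-case letters. Mass-action system: $\dot{\mathbf{x}}=\sum_{y\to y'}k_{yy'}\mathbf{x}^y(y'-y)$ with rate constants $k_{yy'}>0$ (vector $\mathbf{k}$). Total derivative: $\dot\varphi=\sum_i\frac{\partial\varphi}{\partial x_i}\dot x_i$ with $\dot x_i$ replaced by the right-hand side; $\varphi^{(\ell)}$ its $\ell$-th iterate, a polynomial in concentrations with coefficients polynomial in $\mathbf{k}$; a monomial appears if its coefficient is a nonzero polynomial in $\mathbf{k}$. (H1) Every connected component has the form $Y+S_0\rightleftarrows U_1\to Y+S_1\rightleftarrows\cdots\rightleftarrows U_L\to Y+S_L$ (reactions $Y+S_{j-1}\to U_j$, $U_j\to Y+S_{j-1}$, $U_j\to Y+S_j$), unique enzyme $Y$; intermediates ($U_j$) distinct throughout the network; non-intermediates of a component pairwise distinct but may appear in other components; each complex in a unique component. $\mathscr{S}_U$ = substrates/products of the component of intermediate $U$. (H2) A partition $\mathscr{S}^{(0)}\sqcup\cdots\sqcup\mathscr{S}^{(M)}$ ($M\ge2$, nonempty, $\mathscr{S}^{(0)}$ the intermediates) with: for each intermediate $U$ with enzyme $Y$, some $\alpha\ge1$ has $\mathscr{S}_U\subseteq\mathscr{S}^{(\alpha)}$,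 $Y\notin\mathscr{S}^{(\alpha)}$. A non-intermediate $X_1$ reacts with a non-intermediate $X_2$ if there is a reaction $X_1+X_2\to U$ with $U$ intermediate. *)

theory Defs
  imports Complex_Main "HOL-Library.Poly_Mapping"
begin

type_synonym 's complex = "'s \<Rightarrow>\<^sub>0 nat"
type_synonym 's reaction = "'s complex \<times> 's complex"

text \<open>A connected component of the form
  Y+S_0 <-> U_1 -> Y+S_1 <-> ... <-> U_L -> Y+S_L
  is given by the triple (Y, [S_0,...,S_L], [U_1,...,U_L]).\<close>
type_synonym 's component = "'s \<times> 's list \<times> 's list"

definition sp :: "'s \<Rightarrow> 's complex" where
  "sp s = Poly_Mapping.single s 1"

definition comp_wf :: "'s component \<Rightarrow> bool" where
  "comp_wf c = (case c of (Y, S, U) \<Rightarrow>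
     length U \<ge> 1 \<and> length S = length U + 1 \<and> distinct (Y # S) \<and> distinct U)"

text \<open>Reactions of a component: for j = 1..L (list index j-1 for U, j-1 and j for S):
  Y+S_{j-1} -> U_j,  U_j -> Y+S_{j-1},  U_j -> Y+S_j.\<close>
definition comp_reactions :: "'s component \<Rightarrow> 's reaction set" where
  "comp_reactions c = (case c of (Y, S, U) \<Rightarrow>
     (\<Union>j<length U.
        {(sp Y + sp (S ! j), sp (U ! j)),
         (sp (U ! j), sp Y + sp (S ! j)),
         (sp (U ! j), sp Y + sp (S ! Suc j))}))"

definition comp_complexes :: "'s component \<Rightarrow> 's complex set" where
  "comp_complexes c = (case c of (Y, S, U) \<Rightarrow>
     (\<lambda>s. sp Y + sp s) ` set S \<union> sp ` set U)"

definition comp_intermediates :: "'s component \<Rightarrow> 's set" where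
  "comp_intermediates c = set (snd (snd c))"

definition comp_nonintermediates :: "'s component \<Rightarrow> 's set" where
  "comp_nonintermediates c = insert (fst c) (set (fst (snd c)))"

definition network_reactions :: "'s component list \<Rightarrow> 's reaction set" where
  "network_reactions N = (\<Union>c\<in>set N. comp_reactions c)"

definition intermediates :: "'s component list \<Rightarrow> 's set" where
  "intermediates N = (\<Union>c\<in>set N. comp_intermediates c)"

definition nonintermediates :: "'s component list \<Rightarrow> 's set" where
  "nonintermediates N = (\<Union>c\<in>set N. comp_nonintermediates c)"

definition H1 :: "'s component list \<Rightarrow> bool" where
  "H1 N = ((\<forall>c\<in>set N. comp_wf c)
     \<and> (\<forall>i<length N. \<forall>j<length N. i \<noteq> j \<longrightarrow>
            comp_intermediates (N ! i) \<inter> comp_intermediates (N ! j) = {}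
          \<and> comp_complexes (N ! i) \<inter> comp_complexes (N ! j) = {})
     \<and> intermediates N \<inter> nonintermediates N = {})"

definition H2 :: "'s component list \<Rightarrow> nat \<Rightarrow> (nat \<Rightarrow> 's set) \<Rightarrow> bool" where
  "H2 N M P = (M \<ge> 2
     \<and> (\<forall>a\<le>M. P a \<noteq> {})
     \<and> (\<forall>a\<le>M. \<forall>b\<le>M. a \<noteq> b \<longrightarrow> P a \<inter> P b = {})
     \<and> (\<Union>a\<le>M. P a) = UNIV
     \<and> P 0 = intermediates N
     \<and> (\<forall>c\<in>set N. \<forall>u\<in>comp_intermediates c.
          \<exists>a. 1 \<le> a \<and> a \<le> M \<and> set (fst (snd c)) \<subseteq> P a \<and> fst c \<notin> P a))"

definition reacts_with :: "'s component list \<Rightarrow> 's \<Rightarrow> 's \<Rightarrow> bool" where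
  "reacts_with N X1 X2 = (X1 \<notin> intermediates N \<and> X2 \<notin> intermediates N \<and>
     (\<exists>U\<in>intermediates N. (sp X1 + sp X2, sp U) \<in> network_reactions N))"

text \<open>Variables: Inl s is the concentration of species s, Inr r is the rate
  constant k_r of reaction r.\<close>
type_synonym 's var = "'s + 's reaction"
type_synonym 's mpoly = "('s var \<Rightarrow>\<^sub>0 nat) \<Rightarrow>\<^sub>0 real"

definition pvar :: "'s var \<Rightarrow> 's mpoly" where
  "pvar v = Poly_Mapping.single (Poly_Mapping.single v 1) 1"

definition xmon :: "'s complex \<Rightarrow> 's mpoly" where
  "xmon y = (\<Prod>s\<in>Poly_Mapping.keys y. pvar (Inl s) ^ Poly_Mapping.lookup y s)"

definition pderiv_var :: "'s var \<Rightarrow> 's mpoly \<Rightarrow> 's mpoly" where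
  "pderiv_var v p = (\<Sum>m\<in>Poly_Mapping.keys p.
     Poly_Mapping.single (m - Poly_Mapping.single v 1)
       (Poly_Mapping.lookup p m * of_nat (Poly_Mapping.lookup m v)))"

definition mass_action_rhs :: "'s component list \<Rightarrow> 's \<Rightarrow> 's mpoly" where
  "mass_action_rhs N s = (\<Sum>r\<in>network_reactions N.
     pvar (Inr r) * xmon (fst r) *
     of_int (int (Poly_Mapping.lookup (snd r) s) - int (Poly_Mapping.lookup (fst r) s)))"

definition total_deriv :: "'s::finite component list \<Rightarrow> 's mpoly \<Rightarrow> 's mpoly" where
  "total_deriv N phi = (\<Sum>s\<in>UNIV. pderiv_var (Inl s) phi * mass_action_rhs N s)"

text \<open>A monomial in the concentrations (exponent vector mu) appears in phi iff its
  coefficient, a polynomial in the rate constants, is nonzero, i.e. some monomial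
  of phi has concentration part mu.\<close>
definition appears_in :: "('s \<Rightarrow> nat) \<Rightarrow> 's mpoly \<Rightarrow> bool" where
  "appears_in mu phi = (\<exists>m\<in>Poly_Mapping.keys phi. \<forall>s. Poly_Mapping.lookup m (Inl s) = mu s)"

end

theory Submission imports Defs begin

text \<open>Every term of the mass-action right-hand side carries the factor \<open>x^y\<close> of a reactant
  complex \<open>y\<close>, so every monomial of a total derivative is divisible by some reactant monomial.
  Under (H1) a reactant complex is either a single intermediate, which cannot divide a monomial
  in non-intermediates, or \<open>Y + S\<^sub>j\<close> with \<open>Y \<noteq> S\<^sub>j\<close>, and then \<open>Y\<close> and \<open>S\<^sub>j\<close> are two
  factors of the monomial that react with each other.\<close>

definition reactant_divisible :: "'s component list \<Rightarrow> ('s var \<Rightarrow>\<^sub>0 nat) set" where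
  "reactant_divisible N = {m. \<exists>r\<in>network_reactions N.
     \<forall>s. Poly_Mapping.lookup (fst r) s \<le> Poly_Mapping.lookup m (Inl s)}"

lemma add_mem_reactant_divisible:
  assumes "b \<in> reactant_divisible N"
  shows "a + b \<in> reactant_divisible N"
  using assms unfolding reactant_divisible_def
  by (auto simp: Poly_Mapping.lookup_add intro: trans_le_add2)

lemma keys_mult_subset_reactant_divisible:
  fixes p q :: "'s mpoly"
  assumes "Poly_Mapping.keys p \<subseteq> reactant_divisible N \<or> Poly_Mapping.keys q \<subseteq> reactant_divisible N"
  shows "Poly_Mapping.keys (p * q) \<subseteq> reactant_divisible N"
  using assms keys_mult[of p q] add_mem_reactant_divisible[of _ N]
  by (fastforce simp: add.commute)

lemma pvar_power: "pvar v ^ n = Poly_Mapping.single (Poly_Mapping.single v n) (1::real)"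
  unfolding pvar_def
  by (induction n) (auto simp: mult_single single_add[symmetric] add.commute)

lemma prod_single_one:
  "(\<Prod>s\<in>K. Poly_Mapping.single (f s) (1::real)) = Poly_Mapping.single (\<Sum>s\<in>K. f s) 1"
  by (induction K rule: infinite_finite_induct) (auto simp: mult_single)

lemma xmon_eq_single:
  "xmon y = Poly_Mapping.single
     (\<Sum>s\<in>Poly_Mapping.keys y. Poly_Mapping.single (Inl s) (Poly_Mapping.lookup y s)) 1"
  unfolding xmon_def pvar_power prod_single_one ..

lemma lookup_Inl_key_xmon:
  assumes "m \<in> Poly_Mapping.keys (xmon y)"
  shows "Poly_Mapping.lookup m (Inl s) = Poly_Mapping.lookup y s"
  using assms
  by (cases "s \<in> Poly_Mapping.keys y")
     (auto simp: xmon_eq_single lookup_sum lookup_single when_def in_keys_iff split: if_splits)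

lemma keys_xmon_reactant_subset:
  assumes "r \<in> network_reactions N"
  shows "Poly_Mapping.keys (xmon (fst r)) \<subseteq> reactant_divisible N"
  using assms lookup_Inl_key_xmon unfolding reactant_divisible_def by fastforce

lemma keys_mass_action_rhs_subset:
  fixes N :: "'s component list"
  shows "Poly_Mapping.keys (mass_action_rhs N s) \<subseteq> reactant_divisible N"
proof -
  have "Poly_Mapping.keys (pvar (Inr r) * xmon (fst r) * c) \<subseteq> reactant_divisible N"
    if "r \<in> network_reactions N" for r and c :: "'s mpoly"
    using keys_xmon_reactant_subset[OF that]
    by (intro keys_mult_subset_reactant_divisible) (simp add: keys_mult_subset_reactant_divisible)
  then show ?thesis
    unfolding mass_action_rhs_def using keys_sum by fastforce
qed

lemma keys_total_deriv_subset:
  "Poly_Mapping.keys (total_deriv N phi) \<subseteq> reactant_divisible N"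
  unfolding total_deriv_def
  using keys_sum keys_mult_subset_reactant_divisible[OF disjI2[OF keys_mass_action_rhs_subset]]
  by fastforce

lemma reactant_complex_cases:
  assumes "\<forall>c\<in>set N. comp_wf c" and "r \<in> network_reactions N"
  obtains U where "U \<in> intermediates N" and "fst r = sp U"
  | Y S U where "Y \<noteq> S" and "U \<in> intermediates N" and "fst r = sp Y + sp S"
      and "(sp Y + sp S, sp U) \<in> network_reactions N"
proof -
  from assms(2) obtain c where c: "c \<in> set N" "r \<in> comp_reactions c"
    unfolding network_reactions_def by auto
  obtain Y S U where cY: "c = (Y, S, U)" by (cases c)
  from c cY obtain j where j: "j < length U" and
    r: "r = (sp Y + sp (S ! j), sp (U ! j)) \<or> fst r = sp (U ! j)"
    unfolding comp_reactions_def by auto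
  have U: "U ! j \<in> intermediates N"
    using c(1) cY j unfolding intermediates_def comp_intermediates_def by force
  have "length S = length U + 1" "distinct (Y # S)"
    using assms(1) c(1) unfolding comp_wf_def cY by auto
  then have "Y \<noteq> S ! j" using j by auto
  moreover have "(sp Y + sp (S ! j), sp (U ! j)) \<in> network_reactions N"
    using c cY j unfolding network_reactions_def comp_reactions_def by blast
  ultimately show thesis using that U r by auto
qed

lemma reacts_with_commute: "reacts_with N a b = reacts_with N b a"
  unfolding reacts_with_def by (auto simp: add.commute)

lemma ordered_indices_of_distinct_members:
  assumes "a \<in> set xs" and "b \<in> set xs" and "a \<noteq> b"
  obtains i1 i2 where "i1 < i2" and "i2 < length xs" and "{xs ! i1, xs ! i2} = {a, b}"
proof -
  obtain i i' where i: "i < length xs" "xs ! i = a" and i': "i' < length xs" "xs ! i' = b"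
    using assms(1,2) by (auto simp: in_set_conv_nth)
  then have "i \<noteq> i'" using assms(3) by auto
  then show thesis
    using that[of i i'] that[of i' i] i i' by (cases "i < i'") auto
qed

lemma lookup_sp: "Poly_Mapping.lookup (sp a) b = (if a = b then 1 else 0)"
  by (simp add: sp_def lookup_single)

theorem mainTheorem8:
  fixes N :: "'s::finite component list"
    and M :: nat and P :: "nat \<Rightarrow> 's set"
    and X :: 's and l :: nat and Z :: "'s list"
  assumes "H1 N"
    and "H2 N M P"
    and "l \<ge> 1"
    and "length Z \<ge> 2"
    and "\<forall>i<length Z. Z ! i \<notin> intermediates N"
    and "appears_in (\<lambda>s. count_list Z s) ((total_deriv N ^^ l) (pvar (Inl X)))"
  shows "\<exists>i1 i2. i1 < i2 \<and> i2 < length Z \<and> reacts_with N (Z ! i1) (Z ! i2)"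
proof -
  obtain k where "l = Suc k" using assms(3) by (cases l) auto
  then obtain m where "m \<in> reactant_divisible N"
    and mu: "\<forall>s. Poly_Mapping.lookup m (Inl s) = count_list Z s"
    using assms(6) keys_total_deriv_subset unfolding appears_in_def by fastforce
  then obtain r where r: "r \<in> network_reactions N"
    and le: "\<And>s. Poly_Mapping.lookup (fst r) s \<le> count_list Z s"
    unfolding reactant_divisible_def by auto
  have no_intermediate: "a \<in> set Z \<Longrightarrow> a \<notin> intermediates N" for a
    using assms(5) by (auto simp: in_set_conv_nth)
  have wf: "\<forall>c\<in>set N. comp_wf c" using assms(1) unfolding H1_def by blast
  show ?thesis
  proof (rule reactant_complex_cases[OF wf r])
    fix U assume U: "U \<in> intermediates N" and "fst r = sp U"
    then have "U \<in> set Z" using le[of U] by (auto simp: lookup_sp intro: ccontr)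
    with U no_intermediate show ?thesis by blast
  next
    fix Y S U
    assume YS: "Y \<noteq> S" and U: "U \<in> intermediates N" and "fst r = sp Y + sp S"
      and reaction: "(sp Y + sp S, sp U) \<in> network_reactions N"
    then have "Y \<in> set Z" "S \<in> set Z"
      using le[of Y] le[of S] by (auto simp: Poly_Mapping.lookup_add lookup_sp intro: ccontr)
    moreover have "reacts_with N Y S"
      using U reaction calculation no_intermediate unfolding reacts_with_def by auto
    ultimately show ?thesis
      using ordered_indices_of_distinct_members[OF _ _ YS] reacts_with_commute
      by (metis doubleton_eq_iff)
  qed
qed

end
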